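(* Let $P$ be a convex point set in the plane and let $\vec d_1$ be a directed straight line not orthogonal to any line through two points of $P$. Then there exists a directed straight line $\vec d_2$, not orthogonal to any line through two points of $P$ and such that the clockwise rotation bringing $\vec d_1$ to coincide with $\vec d_2$ is at most $180^\circ$, for which the $(\vec d_1,\vec d_2)$-partition of $P$ is balanced.
   Context: A convex point set is a finite point set in the plane in which no point is a convex combination of the others; $\mathcal H_P$ denotes its convex hull. For a directed line $\vec d$ not orthogonal to any line through two points of $P$, order the points of $P$ by their orthogonal projections on $\vec d$; let $p_a(\vec d)$ and $p_b(\vec d)$ be the first (minimum) and last (maximum) point. Let $P_1(\vec d)$ be the set of points of $P$ encountered when walking clockwise along the boundary of $\mathcal H_P$ from $p_a(\vec d)$ to $p_b(\vec d)$, including $p_a(\vec d)$ and excluding $p_b(\vec d)$; let $P_2(\vec d)$ be the set of points encountered walking clockwise from $p_b(\vec d)$ to $p_a(\vec d)$, including $p_b(\vec d)$ and excluding $p_a(\vec d)$. For two such directed lines $\vec d_1,\vec d_2$ with the clockwise rotation bringing $\vec d_1$ to $\vec d_2$ at most $180^\circ$, the $(\vec d_1,\vec d_2)$-partition of $P$ consists of $P_a=P_1(\vec d_1)\cap P_1(\vec d_2)$, $P_b=P_1(\vec d_1)\cap P_2(\vec d_2)$, $P_c=P_2(\vec d_1)\cap P_1(\vec d_2)$, $P_d=P_2(\vec d_1)\cap P_2(\vec d_2)$. It is balanced if $|P_a|+|P_d|\le \frac{|P|}{2}+1$ and $|P_b|+|P_c|\le\frac{|P|}{2}+1$. *)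

theory Defs
  imports "HOL-Analysis.Analysis"
begin

text \<open>Points of the plane are elements of real \<times> real, with the standard
orientation (first coordinate to the right, second coordinate upwards).\<close>

definition convex_point_set :: "(real \<times> real) set \<Rightarrow> bool" where
  "convex_point_set P \<longleftrightarrow> finite P \<and> (\<forall>p\<in>P. p \<notin> convex hull (P - {p}))"

definition cross2 :: "real \<times> real \<Rightarrow> real \<times> real \<Rightarrow> real" where
  "cross2 u v = fst u * snd v - snd u * fst v"

text \<open>A directed line is represented by its (nonzero) direction vector d;
only its direction matters for the notions below.\<close>

definition admissible_dir :: "(real \<times> real) set \<Rightarrow> real \<times> real \<Rightarrow> bool" where
  "admissible_dir P d \<longleftrightarrow> d \<noteq> 0 \<and> (\<forall>p\<in>P. \<forall>q\<in>P. p \<noteq> q \<longrightarrow> (q - p) \<bullet> d \<noteq> 0)"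

definition p_a :: "(real \<times> real) set \<Rightarrow> real \<times> real \<Rightarrow> real \<times> real" where
  "p_a P d = (THE p. p \<in> P \<and> (\<forall>q\<in>P. q \<noteq> p \<longrightarrow> p \<bullet> d < q \<bullet> d))"

definition p_b :: "(real \<times> real) set \<Rightarrow> real \<times> real \<Rightarrow> real \<times> real" where
  "p_b P d = (THE p. p \<in> P \<and> (\<forall>q\<in>P. q \<noteq> p \<longrightarrow> q \<bullet> d < p \<bullet> d))"

text \<open>q is the clockwise successor of p on the boundary of the convex hull of P:
walking clockwise, the hull lies on the right, i.e. all other points of P are
strictly to the right of the directed segment from p to q.\<close>

definition cw_next :: "(real \<times> real) set \<Rightarrow> real \<times> real \<Rightarrow> real \<times> real \<Rightarrow> bool" where
  "cw_next P p q \<longleftrightarrow> p \<in> P \<and> q \<in> P \<and> p \<noteq> q \<and>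
     (\<forall>r\<in>P - {p, q}. cross2 (q - p) (r - p) < 0)"

definition cw_arc :: "(real \<times> real) set \<Rightarrow> real \<times> real \<Rightarrow> real \<times> real \<Rightarrow> (real \<times> real) set" where
  "cw_arc P a b = {r. \<exists>xs. xs \<noteq> [] \<and> hd xs = a \<and> last xs = b \<and> distinct xs \<and>
      (\<forall>i. Suc i < length xs \<longrightarrow> cw_next P (xs ! i) (xs ! Suc i)) \<and> r \<in> set (butlast xs)}"

definition P1 :: "(real \<times> real) set \<Rightarrow> real \<times> real \<Rightarrow> (real \<times> real) set" where
  "P1 P d = cw_arc P (p_a P d) (p_b P d)"

definition P2 :: "(real \<times> real) set \<Rightarrow> real \<times> real \<Rightarrow> (real \<times> real) set" where
  "P2 P d = cw_arc P (p_b P d) (p_a P d)"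

definition rot_cw :: "real \<Rightarrow> real \<times> real \<Rightarrow> real \<times> real" where
  "rot_cw t v = (fst v * cos t + snd v * sin t, - fst v * sin t + snd v * cos t)"

definition cw_within_180 :: "real \<times> real \<Rightarrow> real \<times> real \<Rightarrow> bool" where
  "cw_within_180 d1 d2 \<longleftrightarrow> (\<exists>t c. 0 \<le> t \<and> t \<le> pi \<and> c > 0 \<and> d2 = c *\<^sub>R rot_cw t d1)"

definition balanced_partition :: "(real \<times> real) set \<Rightarrow> real \<times> real \<Rightarrow> real \<times> real \<Rightarrow> bool" where
  "balanced_partition P d1 d2 \<longleftrightarrow>
    (let Pa = P1 P d1 \<inter> P1 P d2; Pb = P1 P d1 \<inter> P2 P d2;
         Pc = P2 P d1 \<inter> P1 P d2; Pd = P2 P d1 \<inter> P2 P d2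
     in real (card Pa) + real (card Pd) \<le> real (card P) / 2 + 1 \<and>
        real (card Pb) + real (card Pc) \<le> real (card P) / 2 + 1)"

end

theory Submission
  imports Defs
begin

text \<open>Walking clockwise from the minimum to the maximum along d, every hull edge points forward
  along d; walking back, every edge points backward. So the points of \<open>P\<^sub>a \<union> P\<^sub>d\<close> are tails of
  hull edges e with \<open>(e \<bullet> d\<^sub>1) (e \<bullet> d\<^sub>2) > 0\<close>, and those of \<open>P\<^sub>b \<union> P\<^sub>c\<close> tails of edges with
  \<open>(e \<bullet> d\<^sub>1) (e \<bullet> d\<^sub>2) < 0\<close>. For \<open>d\<^sub>2 = s d\<^sub>1 + d\<^sub>1\<^sup>\<bottom>\<close>, where \<open>d\<^sub>1\<^sup>\<bottom>\<close> is \<open>d\<^sub>1\<close> turned clockwise by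
  \<open>90\<degree>\<close> (so \<open>d\<^sub>2\<close> is \<open>d\<^sub>1\<close> turned clockwise by less than \<open>180\<degree>\<close>), this product has the sign of
  \<open>s - \<kappa>(e)\<close> for a slope \<open>\<kappa>(e)\<close> of the edge. At most two hull edges are parallel, so every
  slope occurs at most twice, and a threshold s next to the median slope splits the edges
  into two groups of at most \<open>|P|/2 + 1\<close>; only finitely many s make \<open>d\<^sub>2\<close> inadmissible.
  Convexity of P is used only through finiteness: the clockwise successor relation in the
  definitions already carries the hull structure.\<close>

section \<open>Plane vector identities\<close>

lemma inner_real_pair: "(u::real \<times> real) \<bullet> v = fst u * fst v + snd u * snd v"
  by (cases u; cases v) simp

lemma cross2_antisym: "cross2 u v = - cross2 v u"
  by (simp add: cross2_def)

lemma cross2_translate: "cross2 (a - x) (b - x) = cross2 (b - a) (x - a)"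
  by (simp add: cross2_def algebra_simps)

lemma rot_cw_pi_half: "rot_cw (pi / 2) v = (snd v, - fst v)"
  by (simp add: rot_cw_def)

lemma cross2_eq_0_if_orthogonal:
  fixes u v w :: "real \<times> real"
  assumes "u \<bullet> w = 0" "v \<bullet> w = 0" "w \<noteq> 0"
  shows "cross2 u v = 0"
proof -
  have "cross2 u v * (w \<bullet> w) = (u \<bullet> rot_cw (pi/2) w) * (v \<bullet> w) - (u \<bullet> w) * (v \<bullet> rot_cw (pi/2) w)"
    by (simp add: rot_cw_pi_half inner_real_pair cross2_def algebra_simps)
  then show ?thesis using assms by simp
qed

lemma inner_ne_0_if_parallel:
  fixes u v :: "real \<times> real"
  assumes "u \<noteq> 0" "v \<noteq> 0" "cross2 u v = 0"
  shows "u \<bullet> v \<noteq> 0"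
proof
  assume "u \<bullet> v = 0"
  have "(u \<bullet> u) * (v \<bullet> v) = (u \<bullet> v)\<^sup>2 + (cross2 u v)\<^sup>2"
    by (simp add: inner_real_pair cross2_def power2_eq_square algebra_simps)
  then show False using assms \<open>u \<bullet> v = 0\<close> by simp
qed

lemma inner_pos_if_both_opposite:
  fixes u v w :: "real \<times> real"
  assumes "u \<noteq> 0" "cross2 u v = 0" "u \<bullet> v < 0" "u \<bullet> w < 0"
  shows "v \<bullet> w > 0"
proof -
  have "(u \<bullet> u) * (v \<bullet> w) = (u \<bullet> v) * (u \<bullet> w) + cross2 u v * cross2 u w"
    by (simp add: inner_real_pair cross2_def algebra_simps)
  then have "(u \<bullet> u) * (v \<bullet> w) > 0" using assms by (simp add: mult_neg_neg)
  then show ?thesis using inner_ge_zero[of u] by (auto simp: zero_less_mult_iff)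
qed

section \<open>Hull edges\<close>

lemma cw_next_right:
  "cw_next P x q \<Longrightarrow> y \<in> P \<Longrightarrow> y \<noteq> x \<Longrightarrow> y \<noteq> q \<Longrightarrow> cross2 (q - x) (y - x) < 0"
  unfolding cw_next_def by blast

lemma cw_next_unique: "cw_next P x q \<Longrightarrow> cw_next P x q' \<Longrightarrow> q = q'"
  using cross2_antisym[of "q - x" "q' - x"] unfolding cw_next_def by force

definition hull_edge :: "(real \<times> real) set \<Rightarrow> real \<times> real \<Rightarrow> real \<times> real" where
  "hull_edge P x = (THE q. cw_next P x q) - x"

definition hull_edge_tails :: "(real \<times> real) set \<Rightarrow> (real \<times> real) set" where
  "hull_edge_tails P = {x. \<exists>q. cw_next P x q}"

lemma hull_edge_eq: "cw_next P x q \<Longrightarrow> hull_edge P x = q - x"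
  unfolding hull_edge_def using cw_next_unique by (metis the_equality)

lemma hull_edge_tails_subset: "hull_edge_tails P \<subseteq> P"
  unfolding hull_edge_tails_def cw_next_def by blast

lemma finite_hull_edge_tails: "finite P \<Longrightarrow> finite (hull_edge_tails P)"
  using hull_edge_tails_subset by (rule finite_subset)

lemma hull_edge_nonzero:
  assumes "x \<in> hull_edge_tails P"
  shows "hull_edge P x \<noteq> 0"
proof -
  obtain q where "cw_next P x q" using assms unfolding hull_edge_tails_def by blast
  then show ?thesis by (simp add: hull_edge_eq) (auto simp: cw_next_def)
qed

lemma cw_next_parallel_opposite:
  assumes nx: "cw_next P x q" and ny: "cw_next P y r" and "x \<noteq> y"
    and par: "cross2 (q - x) (r - y) = 0"
  shows "(q - x) \<bullet> (r - y) < 0"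
proof (rule ccontr)
  assume "\<not> ?thesis"
  moreover have "q - x \<noteq> 0" "r - y \<noteq> 0" using nx ny unfolding cw_next_def by auto
  ultimately have pos: "(q - x) \<bullet> (r - y) > 0" using inner_ne_0_if_parallel par by fastforce
  have yP: "y \<in> P" and xP: "x \<in> P" using nx ny unfolding cw_next_def by auto
  define c1 where "c1 = cross2 (q - x) (y - x)"
  define c2 where "c2 = cross2 (r - y) (x - y)"
  have c1_lt: "y \<noteq> q \<Longrightarrow> c1 < 0" unfolding c1_def using cw_next_right[OF nx yP] \<open>x \<noteq> y\<close> by blast
  have c2_lt: "x \<noteq> r \<Longrightarrow> c2 < 0" unfolding c2_def using cw_next_right[OF ny xP] \<open>x \<noteq> y\<close> by blast
  have c1_le: "c1 \<le> 0" using c1_lt by (cases "y = q") (auto simp: c1_def cross2_def)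
  have c2_le: "c2 \<le> 0" using c2_lt by (cases "x = r") (auto simp: c2_def cross2_def)
  \<comment> \<open>for equally oriented parallel edges the two side tests have opposite signs\<close>
  have "((q - x) \<bullet> (q - x)) * c2
      = ((q - x) \<bullet> (r - y)) * cross2 (q - x) (x - y) - cross2 (q - x) (r - y) * ((q - x) \<bullet> (x - y))"
    by (simp add: c2_def inner_real_pair cross2_def algebra_simps)
  also have "\<dots> = - ((q - x) \<bullet> (r - y)) * c1"
    using par by (simp add: c1_def cross2_def algebra_simps)
  finally have "((q - x) \<bullet> (q - x)) * c2 = - ((q - x) \<bullet> (r - y)) * c1" .
  moreover have "(q - x) \<bullet> (q - x) > 0" using \<open>q - x \<noteq> 0\<close> by simp
  moreover have "((q - x) \<bullet> (q - x)) * c2 \<le> 0" "((q - x) \<bullet> (r - y)) * c1 \<le> 0"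
    using c1_le c2_le pos \<open>(q - x) \<bullet> (q - x) > 0\<close> by (simp_all add: mult_nonneg_nonpos)
  ultimately have "c1 = 0" "c2 = 0" using pos \<open>(q - x) \<bullet> (q - x) > 0\<close> by simp_all
  then have "r - y = - (q - x)" using c1_lt c2_lt by force
  then have "(q - x) \<bullet> (r - y) = - ((q - x) \<bullet> (q - x))" by (metis inner_minus_right)
  then show False using pos inner_ge_zero[of "q - x"] by linarith
qed

lemma card_hull_edges_orthogonal_le_2:
  assumes "w \<noteq> 0"
  shows "card {x \<in> hull_edge_tails P. hull_edge P x \<bullet> w = 0} \<le> 2"
proof (rule ccontr)
  assume "\<not> ?thesis"
  then obtain T where T: "T \<subseteq> {x \<in> hull_edge_tails P. hull_edge P x \<bullet> w = 0}" "card T = 3"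
    using obtain_subset_with_card_n[of 3] by (metis not_less_eq_eq numeral_2_eq_2 numeral_3_eq_3)
  then obtain x1 x2 x3 where xs: "x1 \<noteq> x2" "x1 \<noteq> x3" "x2 \<noteq> x3"
    and mem: "x1 \<in> hull_edge_tails P" "x2 \<in> hull_edge_tails P" "x3 \<in> hull_edge_tails P"
    and orth: "hull_edge P x1 \<bullet> w = 0" "hull_edge P x2 \<bullet> w = 0" "hull_edge P x3 \<bullet> w = 0"
    unfolding card_3_iff by blast
  have opp: "hull_edge P x \<bullet> hull_edge P y < 0 \<and> cross2 (hull_edge P x) (hull_edge P y) = 0"
    if xy: "x \<in> hull_edge_tails P" "y \<in> hull_edge_tails P" "x \<noteq> y"
      "hull_edge P x \<bullet> w = 0" "hull_edge P y \<bullet> w = 0" for x y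
  proof -
    obtain q r where nx: "cw_next P x q" and ny: "cw_next P y r"
      using xy(1,2) unfolding hull_edge_tails_def by blast
    have "cross2 (hull_edge P x) (hull_edge P y) = 0"
      using cross2_eq_0_if_orthogonal[OF xy(4,5) assms] .
    then show ?thesis
      using cw_next_parallel_opposite[OF nx ny xy(3)] by (simp add: hull_edge_eq[OF nx] hull_edge_eq[OF ny])
  qed
  \<comment> \<open>three pairwise parallel edges cannot be pairwise opposite\<close>
  have "hull_edge P x2 \<bullet> hull_edge P x3 > 0"
    using inner_pos_if_both_opposite[OF hull_edge_nonzero[OF mem(1)]] opp[OF mem(1,2)] opp[OF mem(1,3)]
      xs orth by blast
  then show False using opp[OF mem(2,3)] xs orth by auto
qed

section \<open>Hull edges along the arcs\<close>

lemma admissible_dir_uminus: "admissible_dir P (- d) \<longleftrightarrow> admissible_dir P d"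
  unfolding admissible_dir_def by auto

lemma p_b_eq_p_a_uminus: "p_b P d = p_a P (- d)"
  unfolding p_a_def p_b_def by simp

lemma P2_eq_P1_uminus: "P2 P d = P1 P (- d)"
  unfolding P1_def P2_def p_b_eq_p_a_uminus by simp

lemma p_a_minimal:
  assumes "finite P" "P \<noteq> {}" "admissible_dir P d"
  shows "p_a P d \<in> P" "\<forall>y\<in>P - {p_a P d}. p_a P d \<bullet> d < y \<bullet> d"
proof -
  obtain a where aP: "a \<in> P" and le: "\<And>y. y \<in> P \<Longrightarrow> a \<bullet> d \<le> y \<bullet> d"
    using ex_is_arg_min_if_finite[OF assms(1,2), of "\<lambda>y. y \<bullet> d"]
    unfolding is_arg_min_linorder by blast
  have lt: "\<forall>y\<in>P - {a}. a \<bullet> d < y \<bullet> d"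
  proof
    fix y assume y: "y \<in> P - {a}"
    then have "(y - a) \<bullet> d \<noteq> 0" using aP assms(3) unfolding admissible_dir_def by auto
    then show "a \<bullet> d < y \<bullet> d" using le[of y] y by (simp add: inner_diff_left)
  qed
  have "p_a P d = a"
    unfolding p_a_def
  proof (rule the_equality)
    show "a \<in> P \<and> (\<forall>y\<in>P. y \<noteq> a \<longrightarrow> a \<bullet> d < y \<bullet> d)" using aP lt by blast
    fix p assume p: "p \<in> P \<and> (\<forall>y\<in>P. y \<noteq> p \<longrightarrow> p \<bullet> d < y \<bullet> d)"
    show "p = a"
    proof (rule ccontr)
      assume "p \<noteq> a"
      then have "p \<bullet> d < a \<bullet> d" "a \<bullet> d < p \<bullet> d" using p aP lt by auto
      then show False by simp
    qed
  qed
  with aP lt show "p_a P d \<in> P" "\<forall>y\<in>P - {p_a P d}. p_a P d \<bullet> d < y \<bullet> d" by simp_all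
qed

lemma p_b_maximal:
  assumes "finite P" "P \<noteq> {}" "admissible_dir P d"
  shows "p_b P d \<in> P" "\<forall>y\<in>P - {p_b P d}. y \<bullet> d < p_b P d \<bullet> d"
  using p_a_minimal[of P "- d"] assms by (simp_all add: p_b_eq_p_a_uminus admissible_dir_uminus)

lemma inner_pos_if_right_of_edge:
  fixes a b x q d :: "real \<times> real"
  assumes "cross2 (q - x) (a - x) < 0" "cross2 (q - x) (b - x) < 0"
    and "cross2 (b - a) (x - a) > 0" and "a \<bullet> d < x \<bullet> d" "x \<bullet> d < b \<bullet> d"
  shows "(q - x) \<bullet> d > 0"
proof -
  define u v w where "u = q - x" and "v = a - x" and "w = b - x"
  have "cross2 u v * (w \<bullet> d) + cross2 v w * (u \<bullet> d) + cross2 w u * (v \<bullet> d) = 0"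
    by (simp add: inner_real_pair cross2_def algebra_simps)
  moreover have "cross2 u v * (w \<bullet> d) < 0"
    using assms(1,5) by (simp add: u_def v_def w_def inner_diff_left mult_neg_pos)
  moreover have "cross2 w u > 0" "v \<bullet> d < 0"
    using assms(2,4) cross2_antisym[of w u] by (simp_all add: u_def v_def w_def inner_diff_left)
  then have "cross2 w u * (v \<bullet> d) < 0" by (simp add: mult_pos_neg)
  ultimately have "cross2 v w * (u \<bullet> d) > 0" by linarith
  moreover have "cross2 v w > 0" using assms(3) cross2_translate[of a x b] by (simp add: v_def w_def)
  ultimately show ?thesis by (simp add: u_def zero_less_mult_iff)
qed

text \<open>If q were on or to the right of the line ab, the segment from x to q would meet that line
  outside the segment ab (a and b lie on the same side of xq), yet its projection on d lies
  strictly between those of a and b.\<close>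

lemma cross2_pos_if_right_of_edge:
  fixes a b x q d :: "real \<times> real"
  assumes fx: "cross2 (b - a) (x - a) > 0"
    and ga: "cross2 (q - x) (a - x) < 0" and gb: "cross2 (q - x) (b - x) < 0"
    and "a \<bullet> d < x \<bullet> d" "x \<bullet> d < b \<bullet> d" "a \<bullet> d < q \<bullet> d" "q \<bullet> d < b \<bullet> d"
  shows "cross2 (b - a) (q - a) > 0"
proof (rule ccontr)
  define f where "f y = cross2 (b - a) (y - a)" for y
  assume "\<not> ?thesis"
  then have fq: "f q \<le> 0" by (simp add: f_def)
  have "(f x * ((b - q) \<bullet> d) - f q * ((b - x) \<bullet> d)) * cross2 (q - x) (a - x)
      + (f x * ((q - a) \<bullet> d) - f q * ((x - a) \<bullet> d)) * cross2 (q - x) (b - x) = 0"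
    by (simp add: f_def inner_real_pair cross2_def algebra_simps)
  moreover have "f x * ((b - q) \<bullet> d) > 0" "f x * ((q - a) \<bullet> d) > 0"
    using fx assms(4-7) by (simp_all add: f_def inner_diff_left)
  moreover have "f q * ((b - x) \<bullet> d) \<le> 0" "f q * ((x - a) \<bullet> d) \<le> 0"
    using fq assms(4-7) by (simp_all add: inner_diff_left mult_nonpos_nonneg)
  ultimately show False
    using ga gb mult_pos_neg[of "f x * ((b - q) \<bullet> d) - f q * ((b - x) \<bullet> d)" "cross2 (q - x) (a - x)"]
      mult_pos_neg[of "f x * ((q - a) \<bullet> d) - f q * ((x - a) \<bullet> d)" "cross2 (q - x) (b - x)"]
    by linarith
qed

lemma cw_next_step_along_arc:
  assumes a: "a \<in> P" "\<forall>y\<in>P - {a}. a \<bullet> d < y \<bullet> d"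
    and b: "b \<in> P" "\<forall>y\<in>P - {b}. y \<bullet> d < b \<bullet> d"
    and "a \<noteq> b" "x \<noteq> b" and x: "x = a \<or> cross2 (b - a) (x - a) > 0"
    and nx: "cw_next P x q"
  shows "(q - x) \<bullet> d > 0 \<and> (q = b \<or> cross2 (b - a) (q - a) > 0)"
proof -
  have xP: "x \<in> P" and qP: "q \<in> P" and "q \<noteq> x" using nx unfolding cw_next_def by auto
  show ?thesis
  proof (cases "x = a")
    case True
    then have "q = b \<or> cross2 (q - a) (b - a) < 0" using cw_next_right[OF nx b(1)] \<open>a \<noteq> b\<close> by blast
    moreover have "(q - x) \<bullet> d > 0" using a(2) qP \<open>q \<noteq> x\<close> True by (simp add: inner_diff_left)
    ultimately show ?thesis using cross2_antisym[of "q - a" "b - a"] by auto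
  next
    case False
    with x have fx: "cross2 (b - a) (x - a) > 0" by simp
    have xd: "a \<bullet> d < x \<bullet> d" "x \<bullet> d < b \<bullet> d" using a(2) b(2) xP False \<open>x \<noteq> b\<close> by auto
    have "q \<noteq> a"
    proof
      assume "q = a"
      then have "cross2 (a - x) (b - x) < 0" using cw_next_right[OF nx b(1)] \<open>a \<noteq> b\<close> \<open>x \<noteq> b\<close> by auto
      then show False using fx cross2_translate[of a x b] by simp
    qed
    show ?thesis
    proof (cases "q = b")
      case True
      then show ?thesis using xd by (simp add: inner_diff_left)
    next
      case False
      have ga: "cross2 (q - x) (a - x) < 0" using cw_next_right[OF nx a(1)] \<open>x \<noteq> a\<close> \<open>q \<noteq> a\<close> by auto
      have gb: "cross2 (q - x) (b - x) < 0" using cw_next_right[OF nx b(1)] \<open>x \<noteq> b\<close> False by auto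
      have "a \<bullet> d < q \<bullet> d" "q \<bullet> d < b \<bullet> d" using a(2) b(2) qP \<open>q \<noteq> a\<close> False by auto
      then show ?thesis
        using inner_pos_if_right_of_edge[OF ga gb fx xd] cross2_pos_if_right_of_edge[OF fx ga gb xd] by simp
    qed
  qed
qed

lemma cw_arc_subset: "cw_arc P a b \<subseteq> P"
proof
  fix r assume "r \<in> cw_arc P a b"
  then obtain xs where nx: "\<And>i. Suc i < length xs \<Longrightarrow> cw_next P (xs ! i) (xs ! Suc i)"
    and "r \<in> set (butlast xs)"
    unfolding cw_arc_def by blast
  then obtain i where "i < length xs - 1" "r = xs ! i" by (auto simp: in_set_conv_nth nth_butlast)
  then show "r \<in> P" using nx[of i] unfolding cw_next_def by simp
qed

lemma cw_arc_hull_edge_forward: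
  assumes a: "a \<in> P" "\<forall>y\<in>P - {a}. a \<bullet> d < y \<bullet> d"
    and b: "b \<in> P" "\<forall>y\<in>P - {b}. y \<bullet> d < b \<bullet> d"
    and r: "r \<in> cw_arc P a b"
  shows "r \<in> hull_edge_tails P \<and> hull_edge P r \<bullet> d > 0"
proof -
  obtain xs where ne: "xs \<noteq> []" and hd: "hd xs = a" and la: "last xs = b" and dis: "distinct xs"
    and nx: "\<And>i. Suc i < length xs \<Longrightarrow> cw_next P (xs ! i) (xs ! Suc i)"
    and "r \<in> set (butlast xs)"
    using r unfolding cw_arc_def by blast
  then obtain i where "i < length xs - 1" and ri: "r = xs ! i"
    by (auto simp: in_set_conv_nth nth_butlast)
  then have i: "Suc i < length xs" by linarith
  have xs0: "xs ! 0 = a" and xsl: "xs ! (length xs - 1) = b"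
    using hd la ne by (simp_all add: hd_conv_nth last_conv_nth)
  have not_b: "xs ! j \<noteq> b" if "Suc j < length xs" for j
    using that xsl dis by (auto simp: nth_eq_iff_index_eq)
  have "a \<noteq> b" using not_b[of 0] i xs0 by simp
  have inv: "xs ! j = a \<or> cross2 (b - a) (xs ! j - a) > 0" if "Suc j < length xs" for j
    using that
  proof (induction j)
    case (Suc j)
    then show ?case
      using cw_next_step_along_arc[OF a b \<open>a \<noteq> b\<close> not_b _ nx] not_b[OF Suc.prems] by force
  qed (simp add: xs0)
  have "(xs ! Suc i - xs ! i) \<bullet> d > 0"
    using cw_next_step_along_arc[OF a b \<open>a \<noteq> b\<close> not_b[OF i] inv[OF i] nx[OF i]] by blast
  moreover have "xs ! i \<in> hull_edge_tails P" using nx[OF i] unfolding hull_edge_tails_def by blast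
  ultimately show ?thesis using hull_edge_eq[OF nx[OF i]] ri by simp
qed

lemma P1_hull_edge_forward:
  assumes "finite P" "admissible_dir P d" "r \<in> P1 P d"
  shows "r \<in> hull_edge_tails P \<and> hull_edge P r \<bullet> d > 0"
proof -
  have "P \<noteq> {}" using assms(3) cw_arc_subset unfolding P1_def by blast
  then show ?thesis
    using cw_arc_hull_edge_forward[OF p_a_minimal[OF assms(1) _ assms(2)] p_b_maximal[OF assms(1) _ assms(2)]] assms(3)
    unfolding P1_def by blast
qed

lemma P2_hull_edge_backward:
  assumes "finite P" "admissible_dir P d" "r \<in> P2 P d"
  shows "r \<in> hull_edge_tails P \<and> hull_edge P r \<bullet> d < 0"
  using P1_hull_edge_forward[of P "- d" r] assms
  by (simp add: P2_eq_P1_uminus admissible_dir_uminus inner_minus_right)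

section \<open>Balanced thresholds\<close>

lemma exists_threshold_above:
  fixes \<kappa> :: "'a \<Rightarrow> real"
  assumes "finite X" "finite K"
  shows "\<exists>s. s \<notin> K \<and> {x \<in> X. \<kappa> x < s} = {x \<in> X. \<kappa> x \<le> v} \<and> {x \<in> X. s < \<kappa> x} = {x \<in> X. v < \<kappa> x}"
proof -
  define hi where "hi = Min (insert (v + 1) (\<kappa> ` {x \<in> X. v < \<kappa> x}))"
  have fin: "finite (insert (v + 1) (\<kappa> ` {x \<in> X. v < \<kappa> x}))" using assms(1) by simp
  have "v < hi" unfolding hi_def using fin by simp
  then obtain s where s: "s \<in> {v<..<hi} - K"
    using Diff_infinite_finite[OF assms(2)] infinite_Ioo by (metis infinite_imp_nonempty ex_in_conv)
  have "hi \<le> \<kappa> x" if "x \<in> X" "v < \<kappa> x" for x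
    unfolding hi_def using fin that by simp
  with s show ?thesis by force
qed

lemma exists_threshold_below:
  fixes \<kappa> :: "'a \<Rightarrow> real"
  assumes "finite X" "finite K"
  shows "\<exists>s. s \<notin> K \<and> {x \<in> X. \<kappa> x < s} = {x \<in> X. \<kappa> x < v} \<and> {x \<in> X. s < \<kappa> x} = {x \<in> X. v \<le> \<kappa> x}"
proof -
  obtain s where "s \<notin> uminus ` K" "{x \<in> X. - \<kappa> x < s} = {x \<in> X. - \<kappa> x \<le> - v}"
    "{x \<in> X. s < - \<kappa> x} = {x \<in> X. - v < - \<kappa> x}"
    using exists_threshold_above[of X "uminus ` K" "\<lambda>x. - \<kappa> x" "- v"] assms by auto
  moreover have "- s \<notin> K" using \<open>s \<notin> uminus ` K\<close> by (metis image_eqI minus_minus)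
  ultimately show ?thesis by (intro exI[of _ "- s"]) (auto simp: minus_less_iff less_minus_iff)
qed

lemma exists_median:
  fixes \<kappa> :: "'a \<Rightarrow> real"
  assumes "finite X" "X \<noteq> {}"
  shows "\<exists>v. 2 * card {x \<in> X. \<kappa> x < v} < card X \<and> card X \<le> 2 * card {x \<in> X. \<kappa> x \<le> v}"
proof -
  define S where "S = {w \<in> \<kappa> ` X. card X \<le> 2 * card {x \<in> X. \<kappa> x \<le> w}}"
  have "{x \<in> X. \<kappa> x \<le> Max (\<kappa> ` X)} = X" using assms(1) by auto
  then have "Max (\<kappa> ` X) \<in> S" unfolding S_def using assms by simp
  then have finS: "finite S" "S \<noteq> {}" unfolding S_def using assms(1) by auto
  define v where "v = Min S"
  have "v \<in> S" unfolding v_def using finS by simp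
  moreover have "2 * card {x \<in> X. \<kappa> x < v} < card X"
  proof (rule ccontr)
    assume many: "\<not> ?thesis"
    then have "{x \<in> X. \<kappa> x < v} \<noteq> {}" by (metis assms card.empty card_gt_0_iff mult_0_right)
    then have finW: "finite (\<kappa> ` {x \<in> X. \<kappa> x < v})" "\<kappa> ` {x \<in> X. \<kappa> x < v} \<noteq> {}"
      using assms(1) by auto
    define w where "w = Max (\<kappa> ` {x \<in> X. \<kappa> x < v})"
    have "w \<in> \<kappa> ` {x \<in> X. \<kappa> x < v}" unfolding w_def using finW by simp
    then have "w < v" "w \<in> \<kappa> ` X" by auto
    moreover have "\<kappa> x \<le> w" if "x \<in> X" "\<kappa> x < v" for x unfolding w_def using finW(1) that by simp
    then have "{x \<in> X. \<kappa> x \<le> w} = {x \<in> X. \<kappa> x < v}" using \<open>w < v\<close> by force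
    ultimately have "w \<in> S" "w < v" using many unfolding S_def by auto
    then show False using finS unfolding v_def by (meson Min_le leD)
  qed
  ultimately show ?thesis unfolding S_def by blast
qed

text \<open>The slack of 2 absorbs the (at most two) elements whose value is the median itself.\<close>

lemma exists_balanced_threshold:
  fixes \<kappa> :: "'a \<Rightarrow> real"
  assumes "finite X" "finite K" and fibre: "\<And>v. card {x \<in> X. \<kappa> x = v} \<le> 2"
  shows "\<exists>s. s \<notin> K \<and> 2 * card {x \<in> X. \<kappa> x < s} \<le> card X + 2 \<and> 2 * card {x \<in> X. s < \<kappa> x} \<le> card X + 2"
proof (cases "X = {}")
  case True
  obtain s :: real where "s \<notin> K" using ex_new_if_finite[OF infinite_UNIV_char_0 assms(2)] by blast
  with True show ?thesis by auto
next
  case False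
  obtain v where v: "2 * card {x \<in> X. \<kappa> x < v} < card X" "card X \<le> 2 * card {x \<in> X. \<kappa> x \<le> v}"
    using exists_median[OF assms(1) False] by blast
  have split: "card {x \<in> X. p x} + card {x \<in> X. \<not> p x} = card X" for p
    using card_Int_Diff[OF assms(1), of "Collect p"] by (simp add: Int_def set_diff_eq)
  have "{x \<in> X. \<kappa> x \<le> v} = {x \<in> X. \<kappa> x < v} \<union> {x \<in> X. \<kappa> x = v}" by auto
  then have le: "card {x \<in> X. \<kappa> x \<le> v} = card {x \<in> X. \<kappa> x < v} + card {x \<in> X. \<kappa> x = v}"
    using assms(1) by (simp add: card_Un_disjoint disjoint_iff)
  show ?thesis
  proof (cases "2 * card {x \<in> X. v \<le> \<kappa> x} \<le> card X + 2")
    case True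
    then show ?thesis using exists_threshold_below[OF assms(1,2), of \<kappa> v] v by auto
  next
    case False
    then show ?thesis using exists_threshold_above[OF assms(1,2), of \<kappa> v] v fibre[of v] le
        split[of "\<lambda>x. v \<le> \<kappa> x"] split[of "\<lambda>x. v < \<kappa> x"] by (auto simp: not_le not_less)
  qed
qed

section \<open>Sheared directions\<close>

lemma cw_within_180_shear: "cw_within_180 d (s *\<^sub>R d + rot_cw (pi / 2) d)"
proof -
  define c where "c = sqrt (s\<^sup>2 + 1)"
  have "s\<^sup>2 + 1 > 0" by (simp add: add_nonneg_pos)
  then have "c > 0" and c2: "c\<^sup>2 = s\<^sup>2 + 1" unfolding c_def by simp_all
  have "\<bar>s\<bar> \<le> c" unfolding c_def using real_sqrt_le_mono[of "s\<^sup>2" "s\<^sup>2 + 1"] by simp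
  then have y: "-1 \<le> s / c" "s / c \<le> 1" using \<open>c > 0\<close> by (auto simp: field_simps abs_le_iff)
  define t where "t = arccos (s / c)"
  have t: "0 \<le> t" "t \<le> pi" unfolding t_def using y by (auto intro: arccos_lbound arccos_ubound)
  have cos: "c * cos t = s" unfolding t_def using y \<open>c > 0\<close> by simp
  have "1 - (s / c)\<^sup>2 = (c\<^sup>2 - s\<^sup>2) / c\<^sup>2" using \<open>c > 0\<close> by (simp add: power_divide field_simps)
  also have "\<dots> = (1 / c)\<^sup>2" using c2 by (simp add: power_divide)
  finally have sin: "c * sin t = 1" unfolding t_def using y \<open>c > 0\<close> by (simp add: sin_arccos)
  have "c *\<^sub>R rot_cw t d = (fst d * (c * cos t) + snd d * (c * sin t), - fst d * (c * sin t) + snd d * (c * cos t))"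
    by (simp add: rot_cw_def algebra_simps)
  then have "s *\<^sub>R d + rot_cw (pi / 2) d = c *\<^sub>R rot_cw t d"
    unfolding cos sin by (simp add: rot_cw_pi_half prod_eq_iff)
  with t \<open>c > 0\<close> show ?thesis unfolding cw_within_180_def by blast
qed

lemma inner_shear: "v \<bullet> (s *\<^sub>R d + rot_cw (pi / 2) d) = s * (v \<bullet> d) + v \<bullet> rot_cw (pi / 2) d"
  by (simp add: inner_add_right)

lemma shear_nonzero:
  assumes "d \<noteq> 0"
  shows "s *\<^sub>R d + rot_cw (pi / 2) d \<noteq> 0"
proof
  assume "s *\<^sub>R d + rot_cw (pi / 2) d = 0"
  then have "rot_cw (pi / 2) d \<bullet> (s *\<^sub>R d + rot_cw (pi / 2) d) = 0" by simp
  then have "d \<bullet> d = 0" by (simp add: rot_cw_pi_half inner_real_pair algebra_simps)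
  then show False using assms by simp
qed

lemma admissible_dir_shear_cofinite:
  assumes "finite P" "admissible_dir P d"
  shows "finite {s. \<not> admissible_dir P (s *\<^sub>R d + rot_cw (pi / 2) d)}"
proof (rule finite_subset)
  show "finite ((\<lambda>(p, q). - ((q - p) \<bullet> rot_cw (pi / 2) d) / ((q - p) \<bullet> d)) ` (P \<times> P))"
    using assms(1) by simp
  show "{s. \<not> admissible_dir P (s *\<^sub>R d + rot_cw (pi / 2) d)}
      \<subseteq> (\<lambda>(p, q). - ((q - p) \<bullet> rot_cw (pi / 2) d) / ((q - p) \<bullet> d)) ` (P \<times> P)"
  proof
    fix s assume s: "s \<in> {s. \<not> admissible_dir P (s *\<^sub>R d + rot_cw (pi / 2) d)}"
    have "d \<noteq> 0" using assms(2) unfolding admissible_dir_def by simp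
    then have "s *\<^sub>R d + rot_cw (pi / 2) d \<noteq> 0" by (rule shear_nonzero)
    then obtain p q where "p \<in> P" "q \<in> P" "p \<noteq> q" "s * ((q - p) \<bullet> d) + (q - p) \<bullet> rot_cw (pi / 2) d = 0"
      using s unfolding admissible_dir_def inner_shear by auto
    moreover have "(q - p) \<bullet> d \<noteq> 0" using calculation assms(2) unfolding admissible_dir_def by auto
    ultimately show "s \<in> (\<lambda>(p, q). - ((q - p) \<bullet> rot_cw (pi / 2) d) / ((q - p) \<bullet> d)) ` (P \<times> P)"
      by (auto simp: field_simps intro!: image_eqI[of _ _ "(p, q)"])
  qed
qed

text \<open>The value of s at which the hull edge leaving x becomes orthogonal to the sheared
  direction \<open>s *\<^sub>R d + rot_cw (pi / 2) d\<close>.\<close>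

definition edge_slope :: "(real \<times> real) set \<Rightarrow> real \<times> real \<Rightarrow> real \<times> real \<Rightarrow> real" where
  "edge_slope P d x = - (hull_edge P x \<bullet> rot_cw (pi / 2) d) / (hull_edge P x \<bullet> d)"

lemma hull_edge_inner_nonzero:
  assumes "admissible_dir P d" "x \<in> hull_edge_tails P"
  shows "hull_edge P x \<bullet> d \<noteq> 0"
proof -
  obtain q where "cw_next P x q" using assms(2) unfolding hull_edge_tails_def by blast
  then show ?thesis using assms(1) by (simp add: hull_edge_eq) (auto simp: cw_next_def admissible_dir_def)
qed

lemma edge_sign_shear:
  fixes s :: real
  assumes "admissible_dir P d" "x \<in> hull_edge_tails P"
  defines "e \<equiv> hull_edge P x" and "d' \<equiv> s *\<^sub>R d + rot_cw (pi / 2) d"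
  shows "0 < (e \<bullet> d) * (e \<bullet> d') \<longleftrightarrow> edge_slope P d x < s"
    and "(e \<bullet> d) * (e \<bullet> d') < 0 \<longleftrightarrow> s < edge_slope P d x"
proof -
  have nz: "e \<bullet> d \<noteq> 0" unfolding e_def by (rule hull_edge_inner_nonzero[OF assms(1,2)])
  have eq: "(e \<bullet> d) * (e \<bullet> d') = (e \<bullet> d)\<^sup>2 * (s - edge_slope P d x)"
    using nz unfolding edge_slope_def e_def d'_def inner_shear by (simp add: field_simps power2_eq_square)
  have "(e \<bullet> d)\<^sup>2 > 0" using nz by simp
  then show "0 < (e \<bullet> d) * (e \<bullet> d') \<longleftrightarrow> edge_slope P d x < s"
    and "(e \<bullet> d) * (e \<bullet> d') < 0 \<longleftrightarrow> s < edge_slope P d x"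
    unfolding eq by (simp_all add: zero_less_mult_iff mult_less_0_iff)
qed

lemma card_edge_slope_fibre_le_2:
  assumes "finite P" "admissible_dir P d"
  shows "card {x \<in> hull_edge_tails P. edge_slope P d x = v} \<le> 2"
proof -
  have sub: "{x \<in> hull_edge_tails P. edge_slope P d x = v}
      \<subseteq> {x \<in> hull_edge_tails P. hull_edge P x \<bullet> (v *\<^sub>R d + rot_cw (pi / 2) d) = 0}"
  proof
    fix x assume "x \<in> {x \<in> hull_edge_tails P. edge_slope P d x = v}"
    then have x: "x \<in> hull_edge_tails P" and "edge_slope P d x = v" by auto
    then have "\<not> 0 < (hull_edge P x \<bullet> d) * (hull_edge P x \<bullet> (v *\<^sub>R d + rot_cw (pi / 2) d))"
      "\<not> (hull_edge P x \<bullet> d) * (hull_edge P x \<bullet> (v *\<^sub>R d + rot_cw (pi / 2) d)) < 0"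
      using edge_sign_shear[OF assms(2) x, of v] by simp_all
    then have "(hull_edge P x \<bullet> d) * (hull_edge P x \<bullet> (v *\<^sub>R d + rot_cw (pi / 2) d)) = 0"
      by linarith
    then show "x \<in> {x \<in> hull_edge_tails P. hull_edge P x \<bullet> (v *\<^sub>R d + rot_cw (pi / 2) d) = 0}"
      using x hull_edge_inner_nonzero[OF assms(2) x] by simp
  qed
  have fin: "finite {x \<in> hull_edge_tails P. hull_edge P x \<bullet> (v *\<^sub>R d + rot_cw (pi / 2) d) = 0}"
    by (rule finite_subset[OF _ finite_hull_edge_tails[OF assms(1)]]) blast
  have "d \<noteq> 0" using assms(2) unfolding admissible_dir_def by simp
  then show ?thesis
    using card_mono[OF fin sub] card_hull_edges_orthogonal_le_2[OF shear_nonzero[OF \<open>d \<noteq> 0\<close>, of v], where P = P]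
    by linarith
qed

lemma card_add_le_if_disjoint_subset:
  assumes "finite C" "A \<union> B \<subseteq> C" "A \<inter> B = {}"
  shows "card A + card B \<le> card C"
proof -
  have "finite A" "finite B" using assms(1,2) finite_subset by blast+
  then have "card A + card B = card (A \<union> B)" using assms(3) by (simp add: card_Un_disjoint)
  also have "\<dots> \<le> card C" using assms(1,2) by (rule card_mono)
  finally show ?thesis .
qed

lemma balanced_partitionI:
  assumes fin: "finite P" and adm: "admissible_dir P d1" "admissible_dir P d2"
    and same: "2 * card {x \<in> hull_edge_tails P. 0 < (hull_edge P x \<bullet> d1) * (hull_edge P x \<bullet> d2)} \<le> card P + 2"
    and opposite: "2 * card {x \<in> hull_edge_tails P. (hull_edge P x \<bullet> d1) * (hull_edge P x \<bullet> d2) < 0} \<le> card P + 2"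
  shows "balanced_partition P d1 d2"
proof -
  note fw = P1_hull_edge_forward[OF fin] and bw = P2_hull_edge_backward[OF fin]
  have fin_tails: "finite {x \<in> hull_edge_tails P. Q x}" for Q
    by (rule finite_subset[OF _ finite_hull_edge_tails[OF fin]]) blast
  have "card (P1 P d1 \<inter> P1 P d2) + card (P2 P d1 \<inter> P2 P d2)
      \<le> card {x \<in> hull_edge_tails P. 0 < (hull_edge P x \<bullet> d1) * (hull_edge P x \<bullet> d2)}"
    using fw[OF adm(1)] fw[OF adm(2)] bw[OF adm(1)] bw[OF adm(2)]
    by (intro card_add_le_if_disjoint_subset fin_tails) (force intro: mult_pos_pos mult_neg_neg)+
  moreover have "card (P1 P d1 \<inter> P2 P d2) + card (P2 P d1 \<inter> P1 P d2)
      \<le> card {x \<in> hull_edge_tails P. (hull_edge P x \<bullet> d1) * (hull_edge P x \<bullet> d2) < 0}"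
    using fw[OF adm(1)] fw[OF adm(2)] bw[OF adm(1)] bw[OF adm(2)]
    by (intro card_add_le_if_disjoint_subset fin_tails) (force intro: mult_pos_neg mult_neg_pos)+
  ultimately show ?thesis
    using same opposite unfolding balanced_partition_def Let_def by linarith
qed

theorem lemma5:
  fixes P :: "(real \<times> real) set" and d1 :: "real \<times> real"
  assumes "convex_point_set P"
    and "admissible_dir P d1"
  shows "\<exists>d2. admissible_dir P d2 \<and> cw_within_180 d1 d2 \<and> balanced_partition P d1 d2"
proof -
  have fin: "finite P" using assms(1) unfolding convex_point_set_def by simp
  obtain s where s: "admissible_dir P (s *\<^sub>R d1 + rot_cw (pi / 2) d1)"
    "2 * card {x \<in> hull_edge_tails P. edge_slope P d1 x < s} \<le> card (hull_edge_tails P) + 2"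
    "2 * card {x \<in> hull_edge_tails P. s < edge_slope P d1 x} \<le> card (hull_edge_tails P) + 2"
    using exists_balanced_threshold[OF finite_hull_edge_tails[OF fin] admissible_dir_shear_cofinite[OF fin assms(2)]
        card_edge_slope_fibre_le_2[OF fin assms(2)]]
    by blast
  have "card (hull_edge_tails P) \<le> card P" using fin hull_edge_tails_subset by (rule card_mono)
  then have "balanced_partition P d1 (s *\<^sub>R d1 + rot_cw (pi / 2) d1)"
    using s edge_sign_shear[OF assms(2)]
    by (intro balanced_partitionI[OF fin assms(2) s(1)]) (simp_all cong: conj_cong)
  then show ?thesis using s(1) cw_within_180_shear by blast
qed

end
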